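(* Let $\alpha,\beta,\gamma,\alpha',\beta',\gamma'\in\mathbb C$ with $\beta\beta'\neq0$ and $\alpha/\beta=\alpha'/\beta'+1$, and let $G(t,z)$ be the EGF of the GKP triangle $\left[\begin{array}{cc|c}\alpha,&\beta&\gamma\\ \alpha',&\beta'&\gamma'\end{array}\right]$. Put $\rho=\beta/(\beta+\beta't)$. If $\alpha\neq0$ then near $(0,0)$ $$G(t,z)=\Bigl\{1-\rho\bigl[1-(1-\alpha z/\rho)^{\beta/\alpha}\bigr]\Bigr\}^{-\gamma/\beta}\Bigl\{1-\tfrac{\beta't}{\beta+\beta't}\bigl[1-(1-\alpha z/\rho)^{-\beta/\alpha}\bigr]\Bigr\}^{\gamma'/\beta'},$$ and if $\alpha=0$ (i.e. $\alpha'=-\beta'$) then $$G(t,z)=\Bigl\{1-\rho\bigl[1-e^{-z(\beta+\beta't)}\bigr]\Bigr\}^{-\gamma/\beta}\Bigl\{1-\tfrac{\beta't}{\beta+\beta't}\bigl[1-e^{z(\beta+\beta't)}\bigr]\Bigr\}^{\gamma'/\beta'},$$ all powers being principal branches equal to $1$ at $z=0$.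
   Context: GKP triangle: for complex parameters $\alpha,\beta,\gamma,\alpha',\beta',\gamma'$, the array $T_{n,k}=\left[\begin{array}{cc|c}\alpha,&\beta&\gamma\\ \alpha',&\beta'&\gamma'\end{array}\right]_{n,k}$ is defined by $T_{0,0}=1$, $T_{n,k}=0$ if $n<0$, $k<0$ or $k>n$, and $T_{n+1,k+1}=[\alpha n+\beta(k+1)+\gamma]T_{n,k+1}+[\alpha' n+\beta' k+\gamma']T_{n,k}$ for $n\ge0$, $k\in\mathbb Z$; its EGF is $G(t,z)=\sum_{n\ge0}\sum_{k=0}^nT_{n,k}t^kz^n/n!$. *)

theory Defs
  imports "HOL-Analysis.Analysis"
begin

text \<open>GKP triangle T(n,k) with parameters a b c a' b' c' (alpha, beta, gamma, alpha', beta', gamma').\<close>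

fun gkp :: "complex \<Rightarrow> complex \<Rightarrow> complex \<Rightarrow> complex \<Rightarrow> complex \<Rightarrow> complex \<Rightarrow> nat \<Rightarrow> int \<Rightarrow> complex" where
  "gkp a b c a' b' c' 0 k = (if k = 0 then 1 else 0)"
| "gkp a b c a' b' c' (Suc n) k =
     (if k < 0 \<or> k > int (Suc n) then 0
      else (a * of_nat n + b * of_int k + c) * gkp a b c a' b' c' n k
         + (a' * of_nat n + b' * of_int (k - 1) + c') * gkp a b c a' b' c' n (k - 1))"

definition gkp_egf_term :: "complex \<Rightarrow> complex \<Rightarrow> complex \<Rightarrow> complex \<Rightarrow> complex \<Rightarrow> complex \<Rightarrow> complex \<Rightarrow> complex \<Rightarrow> nat \<Rightarrow> complex" where
  "gkp_egf_term a b c a' b' c' t z n =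
     (\<Sum>k\<le>n. gkp a b c a' b' c' n (int k) * t ^ k) * z ^ n / of_nat (fact n)"

end

theory Submission
  imports Defs "HOL-Complex_Analysis.Complex_Analysis"
begin

text \<open>
  The row polynomials P(n,t) = sum_k T(n,k) t^k satisfy
    P(n+1,t) = (a n + c + t (a' n + c')) P(n,t) + (b + b' t) t P'(n,t).
  When a/b = a'/b' + 1 this recurrence is also solved by sum_j D(j,n) b^j (b + b' t)^(n-j),
  where D(j,n)/n! are the Taylor coefficients of (p choose j) (W(y) - 1)^j W(y)^q for the
  solution W of (1 - l y) W' = -W, W(0) = 1, with l = a/b, p = c'/b' - c/b, q = -c'/b'.
  Putting rho = b/(b + b' t) and y = z (b + b' t), the EGF becomes the double series
  sum_n sum_j D(j,n) rho^j y^n / n!.  The factorial bound on D allows summing over n first,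
  and the generalised binomial theorem then gives G = (1 + rho (W(y) - 1))^p W(y)^q.
  Finally W(y) = (1 - l y)^(1/l), or exp(-y) when l = 0; near (0,0) all bases lie in the
  right half-plane, where principal powers split into the stated product.
\<close>

lemma gkp_eq_0_outside: "k < 0 \<or> k > int n \<Longrightarrow> gkp a b c a' b' c' n k = 0"
  by (cases n) auto

lemma affine_power_sum_deriv:
  fixes b b' t :: "'a::real_normed_field"
  assumes "finite A"
  shows "(b + b' * t) * deriv (\<lambda>t. \<Sum>j\<in>A. f j * (b + b' * t) ^ m j) t
       = (\<Sum>j\<in>A. of_nat (m j) * b' * f j * (b + b' * t) ^ m j)"
proof -
  have "((\<lambda>t. \<Sum>j\<in>A. f j * (b + b' * t) ^ m j) has_field_derivative
          (\<Sum>j\<in>A. f j * (of_nat (m j) * (b + b' * t) ^ (m j - 1) * b'))) (at t)"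
    by (auto intro!: derivative_eq_intros sum.cong assms simp: mult_ac)
  then have "(b + b' * t) * deriv (\<lambda>t. \<Sum>j\<in>A. f j * (b + b' * t) ^ m j) t
      = (\<Sum>j\<in>A. f j * (of_nat (m j) * ((b + b' * t) * (b + b' * t) ^ (m j - 1)) * b'))"
    by (simp add: DERIV_imp_deriv sum_distrib_left algebra_simps)
  also have "\<dots> = (\<Sum>j\<in>A. of_nat (m j) * b' * f j * (b + b' * t) ^ m j)"
  proof (intro sum.cong refl)
    fix j show "f j * (of_nat (m j) * ((b + b' * t) * (b + b' * t) ^ (m j - 1)) * b')
        = of_nat (m j) * b' * f j * (b + b' * t) ^ m j"
      by (cases "m j") auto
  qed
  finally show ?thesis .
qed

definition gkp_row ::
    "complex \<Rightarrow> complex \<Rightarrow> complex \<Rightarrow> complex \<Rightarrow> complex \<Rightarrow> complex \<Rightarrow> nat \<Rightarrow> complex \<Rightarrow> complex"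
  where
  "gkp_row a b c a' b' c' n t = (\<Sum>k\<le>n. gkp a b c a' b' c' n (int k) * t ^ k)"

lemma gkp_row_Suc:
  "gkp_row a b c a' b' c' (Suc n) t
     = (a * of_nat n + c + t * (a' * of_nat n + c')) * gkp_row a b c a' b' c' n t
     + (b + b' * t) * (t * deriv (gkp_row a b c a' b' c' n) t)"
proof -
  let ?T = "gkp a b c a' b' c' n"
  define A where "A k = (a * of_nat n + b * of_nat k + c) * ?T (int k) * t ^ k" for k :: nat
  define B where "B k = (a' * of_nat n + b' * of_int (int k - 1) + c') * ?T (int k - 1) * t ^ k" for k :: nat
  have Euler: "t * deriv (gkp_row a b c a' b' c' n) t = (\<Sum>k\<le>n. of_nat k * ?T (int k) * t ^ k)"
    using affine_power_sum_deriv[of "{..n}" 0 1 t "\<lambda>k. ?T (int k)" id]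
    by (simp add: gkp_row_def[abs_def] mult_ac)
  have "gkp_row a b c a' b' c' (Suc n) t = (\<Sum>k\<le>Suc n. A k) + (\<Sum>k\<le>Suc n. B k)"
    unfolding gkp_row_def A_def B_def sum.distrib[symmetric] by (intro sum.cong) (auto simp: algebra_simps)
  also have "(\<Sum>k\<le>Suc n. A k) = (\<Sum>k\<le>n. A k)"
    by (simp add: A_def gkp_eq_0_outside)
  also have "(\<Sum>k\<le>Suc n. B k) = (\<Sum>k\<le>n. B (Suc k))"
    by (subst sum.atMost_Suc_shift) (simp add: B_def gkp_eq_0_outside)
  also have "(\<Sum>k\<le>n. A k) + (\<Sum>k\<le>n. B (Suc k)) = (\<Sum>k\<le>n. A k + B (Suc k))"
    by (rule sum.distrib[symmetric])
  also have "\<dots> = (\<Sum>k\<le>n. (a * of_nat n + c + t * (a' * of_nat n + c')) * (?T (int k) * t ^ k)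
     + (b + b' * t) * (of_nat k * ?T (int k) * t ^ k))"
    by (intro sum.cong) (auto simp: A_def B_def algebra_simps)
  finally show ?thesis
    by (simp add: Euler gkp_row_def sum.distrib sum_distrib_left)
qed

text \<open>\<open>kernel_coeff l p q j n / n!\<close> is the \<open>n\<close>-th Taylor coefficient of \<open>kernel_term p q W j\<close>
  below; the recurrence is the coefficient form of \<open>kernel_term_ode\<close>.\<close>

fun kernel_coeff :: "complex \<Rightarrow> complex \<Rightarrow> complex \<Rightarrow> nat \<Rightarrow> nat \<Rightarrow> complex" where
  "kernel_coeff l p q j 0 = (if j = 0 then 1 else 0)"
| "kernel_coeff l p q j (Suc n) = (l * of_nat n - of_nat j - q) * kernel_coeff l p q j n
     + (if j = 0 then 0 else (of_nat j - 1 - p) * kernel_coeff l p q (j - 1) n)"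

lemma kernel_coeff_eq_0: "n < j \<Longrightarrow> kernel_coeff l p q j n = 0"
  by (induction n arbitrary: j) auto

definition kernel_row ::
    "complex \<Rightarrow> complex \<Rightarrow> complex \<Rightarrow> complex \<Rightarrow> complex \<Rightarrow> nat \<Rightarrow> complex \<Rightarrow> complex"
  where
  "kernel_row l p q b b' n t = (\<Sum>j\<le>n. kernel_coeff l p q j n * b ^ j * (b + b' * t) ^ (n - j))"

lemma kernel_row_Suc:
  "kernel_row l p q b b' (Suc n) t
     = ((l * of_nat n - q) * (b + b' * t) - p * b - of_nat n * b' * t) * kernel_row l p q b b' n t
     + (b + b' * t) * (t * deriv (kernel_row l p q b b' n) t)"
proof -
  define s where "s = b + b' * t"
  let ?D = "\<lambda>j. kernel_coeff l p q j n"
  have Euler: "s * deriv (kernel_row l p q b b' n) t = (\<Sum>j\<le>n. of_nat (n - j) * b' * (?D j * b ^ j) * s ^ (n - j))"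
    using affine_power_sum_deriv[of "{..n}" b b' t "\<lambda>j. ?D j * b ^ j" "\<lambda>j. n - j"]
    by (simp add: kernel_row_def[abs_def] s_def)
  have "kernel_row l p q b b' (Suc n) t
      = (\<Sum>j\<le>Suc n. (l * of_nat n - of_nat j - q) * ?D j * b ^ j * s ^ (Suc n - j))
        + (\<Sum>j\<le>Suc n. (if j = 0 then 0 else (of_nat j - 1 - p) * ?D (j - 1)) * b ^ j * s ^ (Suc n - j))"
    by (simp add: kernel_row_def s_def sum.distrib[symmetric] algebra_simps)
  also have "(\<Sum>j\<le>Suc n. (l * of_nat n - of_nat j - q) * ?D j * b ^ j * s ^ (Suc n - j))
      = (\<Sum>j\<le>n. (l * of_nat n - of_nat j - q) * ?D j * b ^ j * s ^ (Suc n - j))"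
    by (simp add: kernel_coeff_eq_0)
  also have "(\<Sum>j\<le>Suc n. (if j = 0 then 0 else (of_nat j - 1 - p) * ?D (j - 1)) * b ^ j * s ^ (Suc n - j))
      = (\<Sum>j\<le>n. (of_nat j - p) * ?D j * b ^ Suc j * s ^ (n - j))"
    by (subst sum.atMost_Suc_shift) simp
  also have "(\<Sum>j\<le>n. (l * of_nat n - of_nat j - q) * ?D j * b ^ j * s ^ (Suc n - j))
      + (\<Sum>j\<le>n. (of_nat j - p) * ?D j * b ^ Suc j * s ^ (n - j))
      = (\<Sum>j\<le>n. ((l * of_nat n - q) * s - p * b - of_nat n * b' * t) * (?D j * b ^ j * s ^ (n - j))
        + t * (of_nat (n - j) * b' * (?D j * b ^ j) * s ^ (n - j)))"
    unfolding sum.distrib[symmetric]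
  proof (intro sum.cong refl)
    fix j assume "j \<in> {..n}"
    then have pow: "s ^ (Suc n - j) = s * s ^ (n - j)" and diff: "of_nat (n - j) = (of_nat n - of_nat j :: complex)"
      by (simp_all add: Suc_diff_le of_nat_diff)
    then show "(l * of_nat n - of_nat j - q) * ?D j * b ^ j * s ^ (Suc n - j)
        + (of_nat j - p) * ?D j * b ^ Suc j * s ^ (n - j)
      = ((l * of_nat n - q) * s - p * b - of_nat n * b' * t) * (?D j * b ^ j * s ^ (n - j))
        + t * (of_nat (n - j) * b' * (?D j * b ^ j) * s ^ (n - j))"
      unfolding pow diff by (simp add: s_def algebra_simps)
  qed
  finally show ?thesis
    unfolding s_def[symmetric] mult.assoc[of s] mult.left_commute[of s t] Euler
    by (simp add: kernel_row_def s_def sum.distrib sum_distrib_left)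
qed

text \<open>Both sides obey the same recurrence in \<open>n\<close>; the hypothesis \<open>a/b = a'/b' + 1\<close> is exactly
  what makes the multipliers of \<open>kernel_row_Suc\<close> and \<open>gkp_row_Suc\<close> agree.\<close>

lemma gkp_row_eq_kernel_row:
  assumes "b * b' \<noteq> 0" "a / b = a' / b' + 1"
  shows "gkp_row a b c a' b' c' n = kernel_row (a / b) (c' / b' - c / b) (- c' / b') b b' n"
proof (induction n)
  case 0
  show ?case by (simp add: gkp_row_def kernel_row_def fun_eq_iff)
next
  case (Suc n)
  have "(a / b * of_nat n - - c' / b') * (b + b' * t) - (c' / b' - c / b) * b - of_nat n * b' * t
      = a * of_nat n + c + t * (a' * of_nat n + c')" for t
  proof -
    have a: "a = b * a' / b' + b" using assms by (simp add: field_simps)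
    show ?thesis unfolding a using assms by (simp add: field_simps)
  qed
  then show ?case by (simp add: fun_eq_iff gkp_row_Suc kernel_row_Suc Suc.IH)
qed

lemma kernel_coeff_bound:
  "norm (kernel_coeff l p q j n) \<le> (2 * (norm l + norm p + norm q + 1)) ^ n * fact n"
proof (induction n arbitrary: j)
  case 0
  show ?case by simp
next
  case (Suc n)
  define K where "K = norm l + norm p + norm q + 1"
  have K: "K \<ge> 1" by (simp add: K_def)
  show ?case
  proof (cases "j \<le> Suc n")
    case False
    then show ?thesis by (simp add: kernel_coeff_eq_0)
  next
    case True
    have bounds: "0 \<le> norm l" "0 \<le> norm p" "0 \<le> norm q" "real j \<le> real n + 1"
      "0 \<le> norm l * real n" "0 \<le> norm p * real n" "0 \<le> norm q * real n"
      using True by simp_all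
    have K_expand: "(n + 1) * K = norm l * n + norm p * n + norm q * n + n + norm l + norm p + norm q + 1"
      by (simp add: K_def algebra_simps)
    have "norm (l * of_nat n - of_nat j - q) \<le> norm l * n + j + norm q"
      using norm_triangle_ineq4[of "l * of_nat n" "of_nat j"] norm_triangle_ineq4[of "l * of_nat n - of_nat j" q]
      by (simp add: norm_mult)
    also have "\<dots> \<le> (n + 1) * K"
      unfolding K_expand using bounds by linarith
    finally have c1: "norm (l * of_nat n - of_nat j - q) \<le> (n + 1) * K" .
    have "norm (of_nat j - 1 - p) \<le> real (j - 1) + norm p" if "j > 0"
    proof -
      have "of_nat j - 1 - p = of_nat (j - 1) - (p::complex)" using that by (simp add: of_nat_diff)
      then show ?thesis using norm_triangle_ineq4[of "of_nat (j - 1)" p] by simp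
    qed
    also have "\<dots> \<le> (n + 1) * K"
      unfolding K_expand using bounds by linarith
    finally have c2: "j > 0 \<Longrightarrow> norm (of_nat j - 1 - p) \<le> (n + 1) * K" .
    let ?B = "(2 * K) ^ n * fact n"
    have "norm (kernel_coeff l p q j (Suc n)) \<le> (n + 1) * K * ?B + (n + 1) * K * ?B"
      unfolding kernel_coeff.simps(2)
    proof (rule order_trans[OF norm_triangle_ineq add_mono])
      show "norm ((l * of_nat n - of_nat j - q) * kernel_coeff l p q j n) \<le> (n + 1) * K * ?B"
        unfolding norm_mult using Suc.IH[of j] c1 K by (intro mult_mono) (auto simp: K_def)
      show "norm (if j = 0 then 0 else (of_nat j - 1 - p) * kernel_coeff l p q (j - 1) n) \<le> (n + 1) * K * ?B"
        using Suc.IH[of "j - 1"] c2 K by (auto simp: norm_mult K_def intro!: mult_mono)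
    qed
    also have "\<dots> = (2 * K) ^ Suc n * fact (Suc n)" by (simp add: algebra_simps)
    finally show ?thesis by (simp add: K_def)
  qed
qed

lemma not_nonpos_Reals_near_1: "norm (w - 1) < 1 \<Longrightarrow> (w::complex) \<notin> \<real>\<^sub>\<le>\<^sub>0"
  using abs_Re_le_cmod[of "w - 1"] by (auto simp: complex_nonpos_Reals_iff)

lemma minus_of_nat_mult_gbinomial:
  "j > 0 \<Longrightarrow> - of_nat j * (p gchoose j) = (of_nat j - 1 - p) * ((p::complex) gchoose (j - 1))"
  using gbinomial_mult_1[of p "j - 1"] by (simp add: algebra_simps)

lemma fps_coeff_linear_ode:
  fixes f g :: "complex \<Rightarrow> complex"
  assumes F: "f has_fps_expansion F" and G: "g has_fps_expansion G"
    and ode: "eventually (\<lambda>y. (1 - l * y) * deriv f y = m * f y + g y) (nhds 0)"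
  shows "of_nat (Suc n) * fps_nth F (Suc n) = (l * of_nat n + m) * fps_nth F n + fps_nth G n"
proof -
  have "(\<lambda>y. (1 - l * y) * deriv f y) has_fps_expansion (1 - fps_const l * fps_X) * fps_deriv F"
    by (intro fps_expansion_intros F)
  moreover have "(\<lambda>y. (1 - l * y) * deriv f y) has_fps_expansion fps_const m * F + G"
    using has_fps_expansion_cong[OF ode refl] by (auto intro!: fps_expansion_intros F G)
  ultimately have "(1 - fps_const l * fps_X) * fps_deriv F = fps_const m * F + G"
    by (rule fps_expansion_unique_complex)
  then have "fps_nth ((1 - fps_const l * fps_X) * fps_deriv F) n = fps_nth (fps_const m * F + G) n"
    by simp
  moreover have "(1 - fps_const l * fps_X) * fps_deriv F = fps_deriv F - fps_const l * (fps_X * fps_deriv F)"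
    by (simp add: algebra_simps)
  ultimately show ?thesis by (cases n) (auto simp: algebra_simps)
qed

lemma triangular_geometric_summable:
  fixes x :: real
  assumes "0 \<le> x" "2 * x < 1"
  shows "(\<lambda>(n::nat, j::nat). if j \<le> n then x ^ n else 0) summable_on UNIV"
proof -
  have "(\<lambda>(n::nat, j::nat). if j \<le> n then x ^ n else 0) summable_on Sigma UNIV (\<lambda>_. UNIV)"
  proof (rule summable_on_SigmaI[where g = "\<lambda>n. of_nat (Suc n) * x ^ n"])
    fix n :: nat
    show "((\<lambda>j. (\<lambda>(n, j). if j \<le> n then x ^ n else 0) (n, j)) has_sum of_nat (Suc n) * x ^ n) UNIV"
      by (rule has_sum_finite_neutralI[where B = "{..n}"]) auto
  next
    have "((\<lambda>n. (2 * x) ^ n) has_sum (1 / (1 - 2 * x))) UNIV"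
      using geometric_sums[of "2 * x"] assms by (intro sums_nonneg_imp_has_sum) simp_all
    then show "(\<lambda>n. of_nat (Suc n) * x ^ n) summable_on UNIV"
    proof (rule has_sum_imp_summable[THEN summable_on_comparison_test])
      fix n :: nat
      have "real (Suc n) \<le> 2 ^ n"
        using of_nat_mono[OF Suc_leI[OF less_exp[of n]]] by simp
      then show "real (Suc n) * x ^ n \<le> (2 * x) ^ n"
        unfolding power_mult_distrib using assms by (intro mult_right_mono) simp_all
    qed (use assms in simp)
  qed (use assms in auto)
  then show ?thesis by simp
qed

lemma sums_triangular_array:
  fixes f :: "nat \<Rightarrow> nat \<Rightarrow> 'a::{banach, uniform_topological_group_add}"
  assumes zero: "\<And>n j. n < j \<Longrightarrow> f n j = 0"
    and bound: "\<And>n j. norm (f n j) \<le> x ^ n" and x: "0 \<le> x" "2 * x < 1"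
    and columns: "\<And>j. (\<lambda>n. f n j) sums g j" and g: "g sums S"
  shows "(\<lambda>n. \<Sum>j\<le>n. f n j) sums S"
proof -
  define h where "h = (\<lambda>(n, j). f n j)"
  have "(\<lambda>nj. norm (h nj)) summable_on UNIV"
  proof (rule summable_on_comparison_test[OF triangular_geometric_summable[OF x]])
    fix nj :: "nat \<times> nat"
    show "norm (h nj) \<le> (case nj of (n, j) \<Rightarrow> if j \<le> n then x ^ n else 0)"
      using bound zero by (cases nj) (auto simp: h_def not_le)
  qed simp
  then obtain T where T: "(h has_sum T) UNIV"
    using abs_summable_summable summable_on_def by blast
  have rows: "((\<lambda>j. h (n, j)) has_sum (\<Sum>j\<le>n. f n j)) UNIV" for n
    by (rule has_sum_finite_neutralI[where B = "{..n}"]) (auto simp: h_def zero)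
  have "((\<lambda>n. \<Sum>j\<le>n. f n j) has_sum T) UNIV"
    by (rule has_sum_Sigma'[where B = "\<lambda>_. UNIV" and f = h]) (use T rows in auto)
  then have row_sums: "(\<lambda>n. \<Sum>j\<le>n. f n j) sums T"
    by (rule has_sum_imp_sums)
  have T': "((\<lambda>(j, n). f n j) has_sum T) (UNIV \<times> UNIV)"
    using T has_sum_swap[of h UNIV UNIV T] by (simp add: h_def)
  have column_sums: "((\<lambda>n. f n j) has_sum g j) UNIV" for j
  proof -
    have "(\<lambda>n. f n j) summable_on UNIV"
      using summable_on_SigmaD1[of "\<lambda>j n. f n j" UNIV "\<lambda>_. UNIV" j] T' by (auto simp: summable_on_def)
    then obtain V where V: "((\<lambda>n. f n j) has_sum V) UNIV"
      by (auto simp: summable_on_def)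
    with columns[of j] have "V = g j"
      using has_sum_imp_sums sums_unique2 by blast
    with V show ?thesis by simp
  qed
  have "(g has_sum T) UNIV"
    by (rule has_sum_Sigma'[where B = "\<lambda>_. UNIV" and f = "\<lambda>(j, n). f n j"]) (use T' column_sums in auto)
  with g have "S = T"
    using has_sum_imp_sums sums_unique2 by blast
  with row_sums show ?thesis by simp
qed

definition kernel_term ::
    "complex \<Rightarrow> complex \<Rightarrow> (complex \<Rightarrow> complex) \<Rightarrow> nat \<Rightarrow> complex \<Rightarrow> complex"
  where
  "kernel_term p q W j y = (p gchoose j) * (W y - 1) ^ j * W y powr q"

text \<open>\<open>W\<close> is \<open>(1 - l y) powr (1 / l)\<close>, or \<open>exp (- y)\<close> for \<open>l = 0\<close>; staying within \<open>1/2\<close> of \<open>1\<close> keeps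
  all principal powers of \<open>W\<close> holomorphic and the binomial series below convergent.\<close>

locale gkp_kernel =
  fixes l :: complex and W :: "complex \<Rightarrow> complex" and R :: real
  assumes radius_pos: "R > 0"
    and holomorphic: "W holomorphic_on ball 0 R"
    and W_0: "W 0 = 1"
    and near_1: "\<And>y. y \<in> ball 0 R \<Longrightarrow> norm (W y - 1) < 1/2"
    and ode: "\<And>y. y \<in> ball 0 R \<Longrightarrow> (1 - l * y) * deriv W y = - W y"
begin

lemma kernel_term_holomorphic: "kernel_term p q W j holomorphic_on ball 0 R"
  unfolding kernel_term_def[abs_def]
  using near_1 not_nonpos_Reals_near_1 by (intro holomorphic_intros holomorphic) force

lemma kernel_term_ode:
  assumes y: "y \<in> ball 0 R"
  shows "(1 - l * y) * deriv (kernel_term p q W j) y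
       = - (of_nat j + q) * kernel_term p q W j y
         + (if j = 0 then 0 else (of_nat j - 1 - p) * kernel_term p q W (j - 1) y)"
proof -
  define w where "w = W y"
  define w' where "w' = deriv W y"
  have dW: "(W has_field_derivative w') (at y)"
    unfolding w'_def using holomorphic y by (intro holomorphic_derivI[of W "ball 0 R"]) auto
  have w: "w \<notin> \<real>\<^sub>\<le>\<^sub>0" "w \<noteq> 0"
    using not_nonpos_Reals_near_1 near_1[OF y] unfolding w_def by force+
  have "(kernel_term p q W j has_field_derivative
      (p gchoose j) * (of_nat j * (w - 1) ^ (j - 1) * w' * w powr q + (w - 1) ^ j * (q * w powr (q - 1) * w'))) (at y)"
    unfolding kernel_term_def[abs_def] w_def
    using w DERIV_chain2[OF has_field_derivative_powr dW]
    by (auto intro!: derivative_eq_intros dW simp: w_def algebra_simps)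
  then have "(1 - l * y) * deriv (kernel_term p q W j) y
      = (p gchoose j) * (of_nat j * (w - 1) ^ (j - 1) * ((1 - l * y) * w') * w powr q
         + q * (w - 1) ^ j * (w powr (q - 1) * ((1 - l * y) * w')))"
    by (simp add: DERIV_imp_deriv algebra_simps)
  also have "\<dots> = - (p gchoose j) * (of_nat j * (w - 1) ^ (j - 1) * w * w powr q + q * (w - 1) ^ j * (w powr (q - 1) * w))"
    unfolding w'_def w_def ode[OF y] by (simp add: algebra_simps)
  also have "\<dots> = - (p gchoose j) * (of_nat j * ((w - 1) ^ j + (w - 1) ^ (j - 1)) * w powr q + q * (w - 1) ^ j * w powr q)"
  proof -
    have "w powr (q - 1) * w = w powr q" using w by (simp add: powr_diff)
    then show ?thesis by (cases j) (simp_all add: algebra_simps)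
  qed
  also have "\<dots> = - (of_nat j + q) * kernel_term p q W j y
         + (if j = 0 then 0 else (- of_nat j * (p gchoose j)) * (w - 1) ^ (j - 1) * w powr q)"
    by (simp add: kernel_term_def w_def algebra_simps)
  also have "\<dots> = - (of_nat j + q) * kernel_term p q W j y
         + (if j = 0 then 0 else (of_nat j - 1 - p) * kernel_term p q W (j - 1) y)"
  proof (cases "j = 0")
    case False
    then have "j > 0" by simp
    then show ?thesis
      unfolding minus_of_nat_mult_gbinomial[OF \<open>j > 0\<close>] by (simp add: kernel_term_def w_def mult.assoc)
  qed simp
  finally show ?thesis .
qed

lemma kernel_term_has_fps_expansion:
  "kernel_term p q W j has_fps_expansion fps_expansion (kernel_term p q W j) 0"
  using radius_pos by (intro has_fps_expansion_fps_expansion[OF open_ball _ kernel_term_holomorphic]) simp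

lemma fps_expansion_kernel_term:
  "fps_expansion (kernel_term p q W j) 0 = Abs_fps (\<lambda>n. kernel_coeff l p q j n / fact n)"
proof (induction j rule: less_induct)
  case (less j)
  define F where "F = fps_expansion (kernel_term p q W j) 0"
  have F: "kernel_term p q W j has_fps_expansion F"
    unfolding F_def by (rule kernel_term_has_fps_expansion)
  define g where "g = (\<lambda>y. if j = 0 then 0 else (of_nat j - 1 - p) * kernel_term p q W (j - 1) y)"
  define G where "G = (if j = 0 then 0
    else fps_const (of_nat j - 1 - p) * Abs_fps (\<lambda>n. kernel_coeff l p q (j - 1) n / fact n))"
  have G: "g has_fps_expansion G"
    using kernel_term_has_fps_expansion[of p q "j - 1"] less[of "j - 1"]
    by (cases "j = 0") (auto simp: g_def G_def intro!: fps_expansion_intros)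
  have "eventually (\<lambda>y. y \<in> ball 0 R) (nhds 0)"
    using radius_pos by (intro eventually_nhds_in_open) auto
  then have "eventually (\<lambda>y. (1 - l * y) * deriv (kernel_term p q W j) y
      = - (of_nat j + q) * kernel_term p q W j y + g y) (nhds 0)"
    by eventually_elim (simp add: kernel_term_ode g_def)
  from fps_coeff_linear_ode[OF F G this]
  have rec: "of_nat (Suc n) * fps_nth F (Suc n) = (l * of_nat n - of_nat j - q) * fps_nth F n + fps_nth G n" for n
    by (simp add: algebra_simps)
  have "fps_nth F n = kernel_coeff l p q j n / fact n" for n
  proof (induction n)
    case 0
    show ?case
      using fps_nth_fps_expansion[OF F, of 0] by (simp add: kernel_term_def W_0)
  next
    case (Suc n)
    from rec[of n] show ?case
      by (simp add: Suc G_def field_simps del: of_nat_Suc)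
  qed
  then show ?case by (simp add: F_def fps_eq_iff)
qed

lemma kernel_term_sums:
  assumes "y \<in> ball 0 R"
  shows "(\<lambda>n. kernel_coeff l p q j n / fact n * y ^ n) sums kernel_term p q W j y"
proof -
  have holo: "kernel_term p q W j holomorphic_on eball 0 (ereal R)"
    using kernel_term_holomorphic by simp
  have "ereal (norm y) < ereal R" using assms by simp
  then have "norm y < fps_conv_radius (fps_expansion (kernel_term p q W j) 0)"
    using conv_radius_fps_expansion[OF holo] by (rule order.strict_trans2)
  from sums_eval_fps[OF this] show ?thesis
    using eval_fps_expansion'[OF holo, of y] assms by (simp add: fps_expansion_kernel_term)
qed

lemma kernel_binomial_sum:
  fixes \<rho> y :: complex
  assumes \<rho>: "norm \<rho> \<le> 2" and y: "y \<in> ball 0 R"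
    and small: "4 * (2 * (norm l + norm p + norm q + 1)) * norm y < 1"
  shows "(\<lambda>n. \<Sum>j\<le>n. kernel_coeff l p q j n * \<rho> ^ j * y ^ n / fact n)
           sums ((1 + \<rho> * (W y - 1)) powr p * W y powr q)"
proof (rule sums_triangular_array)
  define K where "K = 2 * (norm l + norm p + norm q + 1)"
  show "0 \<le> 2 * K * norm y" by (simp add: K_def)
  show "2 * (2 * K * norm y) < 1" using small unfolding K_def[symmetric] by simp
  show "norm (kernel_coeff l p q j n * \<rho> ^ j * y ^ n / fact n) \<le> (2 * K * norm y) ^ n" for n j
  proof (cases "j \<le> n")
    case True
    have "norm \<rho> ^ j \<le> 2 ^ j" using \<rho> by (simp add: power_mono)
    also have "(2::real) ^ j \<le> 2 ^ n" using True by (simp add: power_increasing)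
    finally have "norm \<rho> ^ j \<le> 2 ^ n" .
    then have "norm (kernel_coeff l p q j n) * norm \<rho> ^ j * norm y ^ n \<le> (K ^ n * fact n) * 2 ^ n * norm y ^ n"
      using kernel_coeff_bound[of l p q j n] by (intro mult_right_mono mult_mono) (auto simp: K_def)
    then show ?thesis
      by (simp add: norm_mult norm_divide norm_power divide_le_eq power_mult_distrib mult_ac)
  qed (simp add: kernel_coeff_eq_0 K_def)
  show "(\<lambda>n. kernel_coeff l p q j n * \<rho> ^ j * y ^ n / fact n) sums (\<rho> ^ j * kernel_term p q W j y)" for j
    using sums_mult[OF kernel_term_sums[OF y], of "\<rho> ^ j" p q j] by (simp add: algebra_simps)
  have "norm \<rho> * norm (W y - 1) \<le> 2 * norm (W y - 1)"
    using \<rho> by (simp add: mult_right_mono)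
  then have "norm (\<rho> * (W y - 1)) < 1"
    using near_1[OF y] by (simp add: norm_mult)
  from sums_mult2[OF gen_binomial_complex[OF this, of p], of "W y powr q"]
  show "(\<lambda>j. \<rho> ^ j * kernel_term p q W j y) sums ((1 + \<rho> * (W y - 1)) powr p * W y powr q)"
    by (simp add: kernel_term_def power_mult_distrib mult_ac)
qed (simp add: kernel_coeff_eq_0)

end


lemma gkp_kernelI:
  assumes R0: "R0 > 0" and holomorphic: "W holomorphic_on ball 0 R0" and W_0: "W 0 = 1"
    and ode: "\<And>y. y \<in> ball 0 R0 \<Longrightarrow> (1 - l * y) * deriv W y = - W y"
  shows "\<exists>R. gkp_kernel l W R"
proof -
  have "continuous (at 0) W"
    using holomorphic_on_imp_continuous_on[OF holomorphic] R0 by (simp add: continuous_on_interior)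
  then obtain d where d: "d > 0" "\<And>y. dist y 0 < d \<Longrightarrow> dist (W y) (W 0) < 1/2"
    unfolding continuous_at_eps_delta by (meson half_gt_zero zero_less_one)
  have "gkp_kernel l W (min R0 d)"
  proof
    show "W holomorphic_on ball 0 (min R0 d)"
      by (rule holomorphic_on_subset[OF holomorphic]) auto
    fix y :: complex assume y: "y \<in> ball 0 (min R0 d)"
    then show "norm (W y - 1) < 1/2" using d(2)[of y] W_0 by (simp add: dist_norm)
    show "(1 - l * y) * deriv W y = - W y" using y by (intro ode) simp
  qed (use R0 d W_0 in auto)
  then show ?thesis by blast
qed

lemma gkp_kernel_exp: "\<exists>R. gkp_kernel 0 (\<lambda>y. exp (- y)) R"
proof (rule gkp_kernelI[of 1])
  fix y :: complex
  have "((\<lambda>y. exp (- y)) has_field_derivative - exp (- y)) (at y)"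
    by (auto intro!: derivative_eq_intros)
  then show "(1 - 0 * y) * deriv (\<lambda>y. exp (- y)) y = - exp (- y)"
    by (simp add: DERIV_imp_deriv)
qed (auto intro!: holomorphic_intros)

lemma gkp_kernel_powr:
  assumes l: "l \<noteq> 0"
  shows "\<exists>R. gkp_kernel l (\<lambda>y. (1 - l * y) powr (1 / l)) R"
proof (rule gkp_kernelI)
  define R0 where "R0 = 1 / (2 * norm l)"
  show "R0 > 0" using l by (simp add: R0_def)
  have base: "1 - l * y \<notin> \<real>\<^sub>\<le>\<^sub>0" "1 - l * y \<noteq> 0" if "y \<in> ball 0 R0" for y
  proof -
    have "norm (l * y) < norm l * R0"
      using that l by (simp add: norm_mult)
    also have "\<dots> = 1 / 2" using l by (simp add: R0_def)
    finally show "1 - l * y \<notin> \<real>\<^sub>\<le>\<^sub>0"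
      by (intro not_nonpos_Reals_near_1) simp
    then show "1 - l * y \<noteq> 0" by auto
  qed
  show "(\<lambda>y. (1 - l * y) powr (1 / l)) holomorphic_on ball 0 R0"
    using base by (intro holomorphic_intros) auto
  fix y :: complex assume y: "y \<in> ball 0 R0"
  have "((\<lambda>y. 1 - l * y) has_field_derivative - l) (at y)"
    by (auto intro!: derivative_eq_intros)
  from DERIV_chain2[where f = "\<lambda>z. z powr (1 / l)", OF has_field_derivative_powr[OF base(1)[OF y]] this]
  have "((\<lambda>y. (1 - l * y) powr (1 / l)) has_field_derivative
          1 / l * (1 - l * y) powr (1 / l - 1) * - l) (at y)"
    by simp
  then have "(1 - l * y) * deriv (\<lambda>y. (1 - l * y) powr (1 / l)) y
      = - (1 / l * l) * ((1 - l * y) powr (1 / l - 1) * (1 - l * y))"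
    by (simp add: DERIV_imp_deriv mult_ac)
  also have "\<dots> = - ((1 - l * y) powr (1 / l))"
    using l base(2)[OF y] by (simp add: powr_diff)
  finally show "(1 - l * y) * deriv (\<lambda>y. (1 - l * y) powr (1 / l)) y = - ((1 - l * y) powr (1 / l))" .
qed simp

lemma small_affine_parameters:
  fixes b b' :: complex
  assumes b: "b \<noteq> 0" and r: "r > 0"
  shows "\<exists>e>0. \<forall>t z. cmod t < e \<and> cmod z < e \<longrightarrow>
           b + b' * t \<noteq> 0 \<and> norm (b / (b + b' * t)) \<le> 2 \<and> norm (z * (b + b' * t)) < r"
proof -
  define e where "e = min (norm b / (2 * norm b' + 1)) (r / (2 * norm b))"
  have "b + b' * t \<noteq> 0 \<and> norm (b / (b + b' * t)) \<le> 2 \<and> norm (z * (b + b' * t)) < r"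
    if t: "cmod t < e" and z: "cmod z < e" for t z
  proof -
    have "norm b' * norm t \<le> norm b' * (norm b / (2 * norm b' + 1))"
      using t by (intro mult_left_mono) (auto simp: e_def)
    also have "\<dots> < norm b / 2"
      using b by (simp add: field_simps pos_divide_less_eq add_pos_nonneg)
    finally have small: "norm (b' * t) < norm b / 2" by (simp add: norm_mult)
    then have lower: "norm b / 2 < norm (b + b' * t)" and upper: "norm (b + b' * t) \<le> 3 / 2 * norm b"
      using norm_triangle_ineq2[of b "- (b' * t)"] norm_triangle_ineq[of b "b' * t"] by auto
    have "norm (z * (b + b' * t)) \<le> norm z * (3 / 2 * norm b)"
      unfolding norm_mult by (rule mult_left_mono[OF upper]) simp
    also have "\<dots> < r / (2 * norm b) * (3 / 2 * norm b)"
      using z b by (intro mult_strict_right_mono) (auto simp: e_def)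
    also have "\<dots> < r" using b r by simp
    finally show ?thesis
      using lower b by (auto simp: norm_divide divide_le_eq)
  qed
  moreover have "e > 0"
    using b r by (simp add: e_def add_nonneg_pos)
  ultimately show ?thesis by blast
qed

lemma powr_mult_inverse_Re_pos:
  fixes x w e :: complex
  assumes "Re x > 0" "Re w > 0"
  shows "(x * inverse w) powr e = x powr e * w powr (- e)"
proof -
  have x0: "x \<noteq> 0" and w0: "w \<noteq> 0" using assms by auto
  have "w \<notin> \<real>\<^sub>\<le>\<^sub>0" using assms(2) by (auto simp: complex_nonpos_Reals_iff)
  then have inv: "Ln (inverse w) = - Ln w" by (rule Ln_inverse)
  have "\<bar>Im (Ln x)\<bar> < pi / 2" "\<bar>Im (Ln w)\<bar> < pi / 2"
    using Re_Ln_pos_lt[OF x0] Re_Ln_pos_lt[OF w0] assms by simp_all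
  then have "Ln (x * inverse w) = Ln x - Ln w"
    using Ln_times_simple[of x "inverse w"] x0 w0 inv by auto
  with x0 w0 show ?thesis
    by (simp add: powr_def right_diff_distrib exp_diff exp_minus divide_inverse)
qed

lemma powr_split_near_1:
  fixes \<rho> w u v :: complex
  assumes w: "norm (w - 1) < 1/2" and \<rho>: "norm \<rho> \<le> 2"
  shows "(1 - \<rho> * (1 - w)) powr u * (1 - (1 - \<rho>) * (1 - inverse w)) powr v
       = (1 + \<rho> * (w - 1)) powr (u + v) * w powr (- v)"
proof -
  define x where "x = 1 + \<rho> * (w - 1)"
  have "w \<noteq> 0" using w by auto
  then have factors: "1 - \<rho> * (1 - w) = x" "1 - (1 - \<rho>) * (1 - inverse w) = x * inverse w"
    by (simp_all add: x_def field_simps)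
  have "norm (x - 1) \<le> 2 * norm (w - 1)"
    using \<rho> by (simp add: x_def norm_mult mult_right_mono)
  then have "Re x > 0" "Re w > 0"
    using w abs_Re_le_cmod[of "x - 1"] abs_Re_le_cmod[of "w - 1"] by auto
  then show ?thesis
    unfolding factors by (simp add: powr_mult_inverse_Re_pos powr_add mult.assoc flip: x_def)
qed

lemma gkp_egf_term_eq_kernel_sum:
  assumes "b * b' \<noteq> 0" "a / b = a' / b' + 1" and s: "b + b' * t \<noteq> 0"
  shows "gkp_egf_term a b c a' b' c' t z n
       = (\<Sum>j\<le>n. kernel_coeff (a / b) (c' / b' - c / b) (- c' / b') j n
                   * (b / (b + b' * t)) ^ j * (z * (b + b' * t)) ^ n / fact n)"
proof -
  have "(b / (b + b' * t)) ^ j * (z * (b + b' * t)) ^ n = b ^ j * (b + b' * t) ^ (n - j) * z ^ n"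
    if "j \<le> n" for j
  proof -
    have "(z * (b + b' * t)) ^ n = (b + b' * t) ^ j * (b + b' * t) ^ (n - j) * z ^ n"
      using that by (simp add: power_mult_distrib flip: power_add)
    then show ?thesis using s by (simp add: power_divide)
  qed
  then show ?thesis
    using gkp_row_eq_kernel_row[OF assms(1,2)]
    by (simp add: gkp_egf_term_def gkp_row_def[symmetric] kernel_row_def sum_distrib_right
        sum_divide_distrib mult.assoc)
qed

lemma gkp_egf_sums_kernel:
  assumes bb': "b * b' \<noteq> 0" and rel: "a / b = a' / b' + 1" and kernel: "gkp_kernel (a / b) W R"
  shows "\<exists>e>0. \<forall>t z. cmod t < e \<and> cmod z < e \<longrightarrow> b + b' * t \<noteq> 0 \<and>
           gkp_egf_term a b c a' b' c' t z sums
             ((1 - b / (b + b' * t) * (1 - W (z * (b + b' * t)))) powr (- c / b)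
            * (1 - (b' * t / (b + b' * t)) * (1 - inverse (W (z * (b + b' * t))))) powr (c' / b'))"
proof -
  interpret gkp_kernel "a / b" W R by (rule kernel)
  define p q where "p = c' / b' - c / b" and "q = - c' / b'"
  define K where "K = 2 * (norm (a / b) + norm p + norm q + 1)"
  have "K > 0" by (simp add: K_def add_nonneg_pos)
  then obtain e where "e > 0" and e: "\<And>t z. cmod t < e \<Longrightarrow> cmod z < e \<Longrightarrow>
      b + b' * t \<noteq> 0 \<and> norm (b / (b + b' * t)) \<le> 2 \<and> norm (z * (b + b' * t)) < min R (1 / (4 * K))"
    using small_affine_parameters[of b "min R (1 / (4 * K))" b'] bb' radius_pos by auto
  have "b + b' * t \<noteq> 0 \<and> gkp_egf_term a b c a' b' c' t z sums
          ((1 - b / (b + b' * t) * (1 - W (z * (b + b' * t)))) powr (- c / b)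
         * (1 - (b' * t / (b + b' * t)) * (1 - inverse (W (z * (b + b' * t))))) powr (c' / b'))"
    if "cmod t < e" "cmod z < e" for t z
  proof -
    define s where "s = b + b' * t"
    have s: "s \<noteq> 0" and \<rho>: "norm (b / s) \<le> 2" and y: "z * s \<in> ball 0 R" "4 * K * norm (z * s) < 1"
      using e[OF that] \<open>K > 0\<close> by (auto simp: s_def field_simps)
    have "1 - b / s = b' * t / s" using s by (simp add: s_def field_simps)
    then have "(1 - b / s * (1 - W (z * s))) powr (- c / b) * (1 - (b' * t / s) * (1 - inverse (W (z * s)))) powr (c' / b')
        = (1 + b / s * (W (z * s) - 1)) powr p * W (z * s) powr q"
      using powr_split_near_1[OF near_1[OF y(1)] \<rho>, of "- c / b" "c' / b'"] by (simp add: p_def q_def)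
    moreover have "gkp_egf_term a b c a' b' c' t z
        = (\<lambda>n. \<Sum>j\<le>n. kernel_coeff (a / b) p q j n * (b / s) ^ j * (z * s) ^ n / fact n)"
      using gkp_egf_term_eq_kernel_sum[OF bb' rel s[unfolded s_def]] by (simp add: fun_eq_iff p_def q_def s_def)
    moreover have "(\<lambda>n. \<Sum>j\<le>n. kernel_coeff (a / b) p q j n * (b / s) ^ j * (z * s) ^ n / fact n)
        sums ((1 + b / s * (W (z * s) - 1)) powr p * W (z * s) powr q)"
      using kernel_binomial_sum[OF \<rho> y(1), where p = p and q = q] y(2) by (simp add: K_def)
    ultimately show ?thesis using s by (simp add: s_def)
  qed
  with \<open>e > 0\<close> show ?thesis by blast
qed

theorem mainTheorem7:
  fixes a b c a' b' c' :: complex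
  assumes "b * b' \<noteq> 0"
    and "a / b = a' / b' + 1"
  shows "\<exists>e>0. \<forall>t z. cmod t < e \<and> cmod z < e \<longrightarrow>
     (let \<rho> = b / (b + b' * t) in
      (a \<noteq> 0 \<longrightarrow>
        gkp_egf_term a b c a' b' c' t z sums
          ((1 - \<rho> * (1 - (1 - a * z / \<rho>) powr (b / a))) powr (- c / b)
         * (1 - (b' * t / (b + b' * t)) * (1 - (1 - a * z / \<rho>) powr (- b / a))) powr (c' / b')))
    \<and> (a = 0 \<longrightarrow>
        gkp_egf_term a b c a' b' c' t z sums
          ((1 - \<rho> * (1 - exp (- z * (b + b' * t)))) powr (- c / b)
         * (1 - (b' * t / (b + b' * t)) * (1 - exp (z * (b + b' * t)))) powr (c' / b'))))"
proof -
  have b: "b \<noteq> 0" using assms(1) by auto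
  obtain W R where kernel: "gkp_kernel (a / b) W R"
    and W: "W = (if a = 0 then (\<lambda>y. exp (- y)) else (\<lambda>y. (1 - a / b * y) powr (1 / (a / b))))"
    using gkp_kernel_exp gkp_kernel_powr[of "a / b"] b by (cases "a = 0") auto
  obtain e where "e > 0" and sums: "\<And>t z. cmod t < e \<Longrightarrow> cmod z < e \<Longrightarrow> b + b' * t \<noteq> 0 \<and>
      gkp_egf_term a b c a' b' c' t z sums
        ((1 - b / (b + b' * t) * (1 - W (z * (b + b' * t)))) powr (- c / b)
       * (1 - (b' * t / (b + b' * t)) * (1 - inverse (W (z * (b + b' * t))))) powr (c' / b'))"
    using gkp_egf_sums_kernel[OF assms kernel] by blast
  from sums \<open>e > 0\<close> show ?thesis
    by (intro exI[of _ e]) (auto simp: Let_def W powr_minus exp_minus mult.assoc)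
qed

end
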